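(* Let $V$ be a real Lorentzian vector space (signature $(1,q)$) of dimension $m=1+q\ge3$, and let $\nabla R$ be a covariant derivative algebraic curvature tensor on $V$. If $\operatorname{trace}\{\mathcal{S}_{\nabla R}(x)^2\}$ is constant for $x\in S^+(V)$ and constant for $x\in S^-(V)$, then $\nabla R=0$.
   Context: A covariant derivative algebraic curvature tensor is $\nabla R\in\otimes^5V^*$ satisfying $\nabla R(a,b,c,d;e)=-\nabla R(b,a,c,d;e)=\nabla R(c,d,a,b;e)$, $\nabla R(a,b,c,d;e)+\nabla R(a,c,d,b;e)+\nabla R(a,d,b,c;e)=0$, and $\nabla R(a,b,c,d;e)+\nabla R(a,b,d,e;c)+\nabla R(a,b,e,c;d)=0$. The Szab\'o operator is defined by $(\mathcal{S}_{\nabla R}(x)y,w)=\nabla R(y,x,x,w;x)$. $S^\pm(V)=\{v\in V:(v,v)=\pm1\}$. *)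

theory Defs
  imports "HOL-Analysis.Analysis"
begin

definition lorentzian :: "(real^'n \<Rightarrow> real^'n \<Rightarrow> real) \<Rightarrow> bool" where
  "lorentzian g \<longleftrightarrow> bilinear g \<and> (\<forall>x y. g x y = g y x) \<and>
     (\<exists>(e::'n \<Rightarrow> real^'n) t. independent (range e) \<and> inj e \<and>
        (\<forall>i j. i \<noteq> j \<longrightarrow> g (e i) (e j) = 0) \<and>
        g (e t) (e t) = -1 \<and> (\<forall>i. i \<noteq> t \<longrightarrow> g (e i) (e i) = 1))"

definition multilinear5 :: "(real^'n \<Rightarrow> real^'n \<Rightarrow> real^'n \<Rightarrow> real^'n \<Rightarrow> real^'n \<Rightarrow> real) \<Rightarrow> bool" where
  "multilinear5 T \<longleftrightarrow>
     (\<forall>b c d e. linear (\<lambda>a. T a b c d e)) \<and>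
     (\<forall>a c d e. linear (\<lambda>b. T a b c d e)) \<and>
     (\<forall>a b d e. linear (\<lambda>c. T a b c d e)) \<and>
     (\<forall>a b c e. linear (\<lambda>d. T a b c d e)) \<and>
     (\<forall>a b c d. linear (\<lambda>e. T a b c d e))"

text \<open>Covariant derivative algebraic curvature tensor; DR a b c d e stands for nabla R(a,b,c,d;e).\<close>
definition cov_deriv_alg_curv :: "(real^'n \<Rightarrow> real^'n \<Rightarrow> real^'n \<Rightarrow> real^'n \<Rightarrow> real^'n \<Rightarrow> real) \<Rightarrow> bool" where
  "cov_deriv_alg_curv DR \<longleftrightarrow> multilinear5 DR \<and>
     (\<forall>a b c d e. DR a b c d e = - DR b a c d e) \<and>
     (\<forall>a b c d e. DR a b c d e = DR c d a b e) \<and>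
     (\<forall>a b c d e. DR a b c d e + DR a c d b e + DR a d b c e = 0) \<and>
     (\<forall>a b c d e. DR a b c d e + DR a b d e c + DR a b e c d = 0)"

definition szabo :: "(real^'n \<Rightarrow> real^'n \<Rightarrow> real) \<Rightarrow>
    (real^'n \<Rightarrow> real^'n \<Rightarrow> real^'n \<Rightarrow> real^'n \<Rightarrow> real^'n \<Rightarrow> real) \<Rightarrow> real^'n \<Rightarrow> (real^'n \<Rightarrow> real^'n)" where
  "szabo g DR x = (THE f. linear f \<and> (\<forall>y w. g (f y) w = DR y x x w x))"

end

(* Let Q_x(y,z) = nabla R(y,x,x,z;x), the form of the Szabo operator S(x).  For a timelike
   x the complement of x is spacelike and Q_x(x,-) = 0, so in an orthonormal frame with
   timelike vector x/|x| the trace of S(x)^2 is the sum of the squares of the entries of Q_x.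
   Constancy of that trace on the unit timelike vectors and homogeneity therefore give
   Q_x(y,y)^2 <= c (-(x,x))^3 for timelike x orthogonal to a frame vector y.  Along
   x = e_t + s e_i, |s| < 1, the left side is the square of a cubic in s while the right side
   vanishes to third order at s = -1 and s = 1; this forces Q_(e_t)(e_j,e_j) = 0.  Frames are
   moved into one another by reflections, so Q_x = 0 for every timelike x, hence for every x
   because x -> Q_x is polynomial, and a cubic polarization combined with the Bianchi
   identities yields nabla R = 0. *)

theory Submission
  imports Defs "HOL-Real_Asymp.Real_Asymp"
begin

definition lorentz_frame :: "(real^'n \<Rightarrow> real^'n \<Rightarrow> real) \<Rightarrow> ('n \<Rightarrow> real^'n) \<Rightarrow> 'n \<Rightarrow> bool" where
  "lorentz_frame g b t \<longleftrightarrow> (\<forall>k l. k \<noteq> l \<longrightarrow> g (b k) (b l) = 0) \<and> g (b t) (b t) = -1 \<and>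
     (\<forall>k. k \<noteq> t \<longrightarrow> g (b k) (b k) = 1) \<and>
     (\<forall>y. (\<Sum>k\<in>UNIV. (g (b k) (b k) * g y (b k)) *\<^sub>R b k) = y)"

lemma cubic_const_eq_0_if_eventually_0:
  fixes a b c d :: real
  assumes "\<forall>\<^sub>F s in at_top. a + b * s + c * s^2 + d * s^3 = 0"
  shows "a = 0"
proof -
  define P where "P s = a + b * s + c * s^2 + d * s^3" for s
  obtain L where L: "\<And>s. s \<ge> L \<Longrightarrow> P s = 0"
    using assms unfolding P_def eventually_at_top_linorder by blast
  define M where "M = max L 1"
  have "a = 4 * P M - 6 * P (2 * M) + 4 * P (3 * M) - P (4 * M)"
    unfolding P_def by (simp add: algebra_simps power2_eq_square power3_eq_cube)
  also have "\<dots> = 0"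
    using L[of M] L[of "2 * M"] L[of "3 * M"] L[of "4 * M"] by (simp add: M_def)
  finally show ?thesis .
qed

lemma cubic_const_eq_0_if_dominated:
  fixes a b c d C :: real
  assumes bound: "\<And>s. -1 < s \<Longrightarrow> s < 1 \<Longrightarrow> (a + b * s + c * s^2 + d * s^3)^2 \<le> C * (1 - s^2)^3"
  shows "a = 0"
proof -
  have endpoints: "h (-1) \<le> 0 \<and> h 1 \<le> 0"
    if "continuous_on {-1..1} h" "\<And>s. -1 < s \<Longrightarrow> s < 1 \<Longrightarrow> h s \<le> 0" for h :: "real \<Rightarrow> real"
    using continuous_le_on_closure[of "{-1<..<1}" h _ 0] that by auto
  have "(a - b + c - d)^2 \<le> 0 \<and> (a + b + c + d)^2 \<le> 0"
    using endpoints[of "\<lambda>s. (a + b * s + c * s^2 + d * s^3)^2 - C * (1 - s^2)^3"] bound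
    by (simp add: continuous_intros)
  then have "a + b + c + d = 0" "a - b + c - d = 0"
    by simp_all
  then have c: "c = - a" and d: "d = - b"
    by linarith+
  have "(a + b * s)^2 - C * (1 - s^2) \<le> 0" if "-1 < s" "s < 1" for s
  proof -
    have "s^2 < 1"
      using that by (simp add: abs_square_less_1 abs_less_iff)
    then have "0 < (1 - s^2)^2"
      by simp
    moreover have "(1 - s^2)^2 * (a + b * s)^2 \<le> (1 - s^2)^2 * (C * (1 - s^2))"
      using bound[OF that] unfolding c d
      by (simp add: algebra_simps power2_eq_square power3_eq_cube)
    ultimately show ?thesis
      by (simp add: mult_le_cancel_left_pos)
  qed
  then have "(a - b)^2 \<le> 0 \<and> (a + b)^2 \<le> 0"
    using endpoints[of "\<lambda>s. (a + b * s)^2 - C * (1 - s^2)"]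
    by (simp add: continuous_intros)
  then have "a - b = 0" "a + b = 0"
    by simp_all
  then show ?thesis
    by linarith
qed

locale sym_bilinear_form =
  fixes g :: "real^'n \<Rightarrow> real^'n \<Rightarrow> real"
  assumes bilinear: "bilinear g"
    and sym: "g x y = g y x"
begin

lemmas g_simps = bilinear_ladd[OF bilinear] bilinear_radd[OF bilinear]
  bilinear_lsub[OF bilinear] bilinear_rsub[OF bilinear] bilinear_lneg[OF bilinear]
  bilinear_rneg[OF bilinear] bilinear_lmul[OF bilinear, unfolded real_scaleR_def]
  bilinear_rmul[OF bilinear, unfolded real_scaleR_def]
  bilinear_lzero[OF bilinear] bilinear_rzero[OF bilinear]

lemma g_sum_left: "g (sum f S) z = (\<Sum>k\<in>S. g (f k) z)"
  by (induction S rule: infinite_finite_induct) (auto simp: g_simps)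

lemma lorentz_frameI:
  fixes e :: "'n \<Rightarrow> real^'n"
  assumes indep: "independent (range e)" and "inj e"
    and orth: "\<And>i j. i \<noteq> j \<Longrightarrow> g (e i) (e j) = 0"
    and "g (e t) (e t) = -1" and "\<And>i. i \<noteq> t \<Longrightarrow> g (e i) (e i) = 1"
  shows "lorentz_frame g e t"
proof -
  have sign_sq: "g (e k) (e k) * g (e k) (e k) = 1" for k
    using assms by (cases "k = t") auto
  have "(\<Sum>k\<in>UNIV. (g (e k) (e k) * g y (e k)) *\<^sub>R e k) = y" for y
  proof -
    have "card (range e) = dim (UNIV :: (real^'n) set)"
      using \<open>inj e\<close> by (simp add: card_image dim_UNIV)
    then have "y \<in> span (range e)"
      using card_eq_dim[of "range e" UNIV] indep by auto
    then obtain u where "y = (\<Sum>v\<in>range e. u v *\<^sub>R v)"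
      using span_finite[of "range e"] by auto
    then have y: "y = (\<Sum>k\<in>UNIV. u (e k) *\<^sub>R e k)"
      using sum.reindex[OF \<open>inj e\<close>, of "\<lambda>v. u v *\<^sub>R v"] by simp
    have "g y (e l) = (\<Sum>k\<in>{l}. u (e k) * g (e k) (e l))" for l
      unfolding y g_sum_left g_simps
      by (rule sum.mono_neutral_right) (auto simp: orth)
    then have "u (e k) = g (e k) (e k) * g y (e k)" for k
      using sign_sq[of k] by (simp add: algebra_simps)
    then have "(\<Sum>k\<in>UNIV. (g (e k) (e k) * g y (e k)) *\<^sub>R e k) = (\<Sum>k\<in>UNIV. u (e k) *\<^sub>R e k)"
      by simp
    then show ?thesis
      using y by simp
  qed
  then show ?thesis
    using assms unfolding lorentz_frame_def by blast
qed

context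
  fixes b :: "'n \<Rightarrow> real^'n" and t :: 'n
  assumes frame: "lorentz_frame g b t"
begin

lemma frame_orth: "k \<noteq> l \<Longrightarrow> g (b k) (b l) = 0"
  and frame_timelike: "g (b t) (b t) = -1"
  and frame_spacelike: "k \<noteq> t \<Longrightarrow> g (b k) (b k) = 1"
  and frame_expansion: "(\<Sum>k\<in>UNIV. (g (b k) (b k) * g y (b k)) *\<^sub>R b k) = y"
  using frame unfolding lorentz_frame_def by blast+

lemma frame_nondegenerate: "(\<And>k. g y (b k) = 0) \<Longrightarrow> y = 0"
  using frame_expansion[of y] by simp

lemma trace_matrix_frame:
  assumes "linear F"
  shows "trace (matrix F) = (\<Sum>k\<in>UNIV. g (b k) (b k) * g (F (b k)) (b k))"
proof -
  have coord: "(\<Sum>i\<in>UNIV. g (axis i 1) w * z $ i) = g z w" for z w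
  proof -
    have "g z w = g (\<Sum>i\<in>UNIV. (z $ i) *\<^sub>R axis i 1) w"
      by (simp only: basis_expansion[of z, unfolded scalar_mult_eq_scaleR])
    then show ?thesis
      by (simp add: g_sum_left g_simps mult.commute)
  qed
  have F_axis: "F (axis i 1) = (\<Sum>k\<in>UNIV. (g (b k) (b k) * g (axis i 1) (b k)) *\<^sub>R F (b k))" for i
    using arg_cong[OF frame_expansion[of "axis i 1"], of F]
    by (simp add: linear_sum[OF assms] linear_scale[OF assms] o_def)
  have "trace (matrix F) = (\<Sum>i\<in>UNIV. F (axis i 1) $ i)"
    by (simp add: trace_def matrix_def)
  also have "\<dots> = (\<Sum>i\<in>UNIV. \<Sum>k\<in>UNIV. g (b k) (b k) * (g (axis i 1) (b k) * F (b k) $ i))"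
    by (subst F_axis) (simp add: sum_component mult_ac)
  also have "\<dots> = (\<Sum>k\<in>UNIV. g (b k) (b k) * (\<Sum>i\<in>UNIV. g (axis i 1) (b k) * F (b k) $ i))"
    by (subst sum.swap) (simp add: sum_distrib_left)
  also have "\<dots> = (\<Sum>k\<in>UNIV. g (b k) (b k) * g (F (b k)) (b k))"
    by (simp only: coord)
  finally show ?thesis .
qed

end

lemma timelike_eq_scale_unit:
  assumes "g x x < 0"
  obtains r u where "r > 0" "r^2 = - g x x" "g u u = -1" "x = r *\<^sub>R u"
proof
  define r where "r = sqrt (- g x x)"
  show "r > 0" "r^2 = - g x x"
    using assms by (simp_all add: r_def)
  then show "g ((1 / r) *\<^sub>R x) ((1 / r) *\<^sub>R x) = -1" "x = r *\<^sub>R (1 / r) *\<^sub>R x"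
    using assms by (simp_all add: g_simps power2_eq_square)
qed

definition reflection :: "real^'n \<Rightarrow> real^'n \<Rightarrow> real^'n" where
  "reflection d y = y - (2 * g y d / g d d) *\<^sub>R d"

lemma reflection_fixes: "g y d = 0 \<Longrightarrow> reflection d y = y"
  unfolding reflection_def by simp

lemma reflection_swap:
  assumes "g p p = g w w" and "g (p - w) (p - w) \<noteq> 0"
  shows "reflection (p - w) p = w"
proof -
  have "g (p - w) (p - w) = 2 * g p (p - w)"
    using assms(1) by (simp add: g_simps sym[of w p])
  then show ?thesis
    using assms(2) unfolding reflection_def by simp
qed

context
  fixes d :: "real^'n"
  assumes non_null: "g d d \<noteq> 0"
begin

lemma reflection_isometry: "g (reflection d y) (reflection d z) = g y z"
  unfolding reflection_def using non_null
  by (simp add: g_simps sym[of d z] field_simps)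

lemma reflection_involutive: "reflection d (reflection d y) = y"
proof -
  have "g (reflection d y) d = - g y d"
    unfolding reflection_def using non_null by (simp add: g_simps field_simps)
  then show ?thesis
    by (simp add: reflection_def)
qed

lemma linear_reflection: "linear (reflection d)"
  by (rule linearI) (simp_all add: reflection_def g_simps add_divide_distrib algebra_simps)

lemma lorentz_frame_reflection:
  assumes frame: "lorentz_frame g b t"
  shows "lorentz_frame g (\<lambda>k. reflection d (b k)) t"
proof -
  have "(\<Sum>k\<in>UNIV. (g (reflection d (b k)) (reflection d (b k)) * g y (reflection d (b k)))
          *\<^sub>R reflection d (b k)) = y" for y
  proof -
    have "g y (reflection d (b k)) = g (reflection d y) (b k)" for k
      using reflection_isometry[of "reflection d y" "b k"] by (simp add: reflection_involutive)
    then have "(\<Sum>k\<in>UNIV. (g (reflection d (b k)) (reflection d (b k)) * g y (reflection d (b k)))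
          *\<^sub>R reflection d (b k)) = reflection d (\<Sum>k\<in>UNIV. (g (b k) (b k) * g (reflection d y) (b k)) *\<^sub>R b k)"
      by (simp add: reflection_isometry linear_sum[OF linear_reflection]
          linear_scale[OF linear_reflection] o_def)
    then show ?thesis
      by (simp add: frame_expansion[OF frame] reflection_involutive)
  qed
  then show ?thesis
    using frame unfolding lorentz_frame_def by (simp add: reflection_isometry)
qed

end

lemma frame_reflect_to_unit_timelike:
  assumes frame: "lorentz_frame g b t" and unit: "g u u = -1"
  obtains v d where "v = u \<or> v = -u" "lorentz_frame g (\<lambda>k. reflection d (b k)) t"
    "reflection d (b t) = v" "\<forall>y. g y (b t) = 0 \<longrightarrow> g y u = 0 \<longrightarrow> reflection d y = y"
proof -
  have norm: "g (b t - v) (b t - v) = -2 - 2 * g (b t) v" if "g v v = -1" for v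
    using frame_timelike[OF frame] that by (simp add: g_simps sym[of v "b t"])
  obtain v where v: "v = u \<or> v = -u" and non_null: "g (b t - v) (b t - v) \<noteq> 0"
  proof (cases "g (b t) u = -1")
    case True
    then show ?thesis
      using that[of "-u"] norm[of "-u"] unit by (simp add: g_simps)
  next
    case False
    then show ?thesis
      using that[of u] norm[of u] unit by simp
  qed
  have "g v v = -1"
    using v unit by (auto simp: g_simps)
  show ?thesis
  proof (rule that[OF v lorentz_frame_reflection[OF non_null frame]])
    show "reflection (b t - v) (b t) = v"
      using reflection_swap non_null frame_timelike[OF frame] \<open>g v v = -1\<close> by simp
    show "\<forall>y. g y (b t) = 0 \<longrightarrow> g y u = 0 \<longrightarrow> reflection (b t - v) y = y"
      using v by (auto intro: reflection_fixes simp: g_simps)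
  qed
qed

end

lemma lorentzian_sym_bilinear_form: "lorentzian g \<Longrightarrow> sym_bilinear_form g"
  unfolding lorentzian_def sym_bilinear_form_def by (elim conjE) (intro conjI)

lemma lorentzian_frame_exists:
  fixes g :: "real^'n \<Rightarrow> real^'n \<Rightarrow> real"
  assumes "lorentzian g"
  obtains b t where "lorentz_frame g b t"
proof -
  interpret sym_bilinear_form g
    using assms by (rule lorentzian_sym_bilinear_form)
  obtain e :: "'n \<Rightarrow> real^'n" and t where "independent (range e)" "inj e" "\<forall>i j. i \<noteq> j \<longrightarrow> g (e i) (e j) = 0"
    "g (e t) (e t) = -1" "\<forall>i. i \<noteq> t \<longrightarrow> g (e i) (e i) = 1"
    using assms unfolding lorentzian_def by (elim conjE exE) blast
  then have "lorentz_frame g e t"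
    by (intro lorentz_frameI) auto
  then show thesis
    by (rule that)
qed

locale cov_deriv_curvature =
  fixes DR :: "real^'n \<Rightarrow> real^'n \<Rightarrow> real^'n \<Rightarrow> real^'n \<Rightarrow> real^'n \<Rightarrow> real"
  assumes cov_deriv_alg_curv: "cov_deriv_alg_curv DR"
begin

lemma DR_multilinear: "multilinear5 DR"
  using cov_deriv_alg_curv unfolding cov_deriv_alg_curv_def by (rule conjunct1)

lemma DR_linear:
  "linear (\<lambda>a. DR a b c d e)" "linear (\<lambda>b. DR a b c d e)" "linear (\<lambda>c. DR a b c d e)"
  "linear (\<lambda>d. DR a b c d e)" "linear (\<lambda>e. DR a b c d e)"
  using DR_multilinear unfolding multilinear5_def by blast+

lemmas DR_simps = DR_linear[THEN linear_add] DR_linear[THEN linear_diff]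
  DR_linear[THEN linear_neg] DR_linear[THEN linear_scale, unfolded real_scaleR_def] DR_linear[THEN linear_0]

lemmas DR_sum = DR_linear[THEN linear_sum, unfolded o_def]

lemma DR_antisym_12: "DR a b c d e = - DR b a c d e"
  and DR_pair_sym: "DR a b c d e = DR c d a b e"
  and DR_bianchi1: "DR a b c d e + DR a c d b e + DR a d b c e = 0"
  and DR_bianchi2: "DR a b c d e + DR a b d e c + DR a b e c d = 0"
  using cov_deriv_alg_curv unfolding cov_deriv_alg_curv_def by blast+

lemma DR_antisym_34: "DR a b c d e = - DR a b d c e"
  using DR_pair_sym[of a b c d e] DR_antisym_12[of c d a b e] DR_pair_sym[of d c a b e] by simp

lemma DR_same_12: "DR a a c d e = 0"
  using DR_antisym_12[of a a c d e] by simp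

lemma DR_same_34: "DR a b c c e = 0"
  using DR_antisym_34[of a b c c e] by simp

lemma DR_szabo_form_sym: "DR a x x c y = DR c x x a y"
  using DR_pair_sym[of a x x c y] DR_antisym_12[of x c a x y] DR_antisym_34[of c x a x y] by simp

lemma DR_szabo_form_along_line:
  obtains c1 c2 c3 where "\<And>s. DR y (x + s *\<^sub>R w) (x + s *\<^sub>R w) z (x + s *\<^sub>R w) =
    DR y x x z x + c1 * s + c2 * s^2 + c3 * s^3"
  by (rule that[of "DR y w x z x + DR y x w z x + DR y x x z w"
        "DR y w w z x + DR y w x z w + DR y x w z w" "DR y w w z w"])
    (simp only: DR_simps, simp add: power2_eq_square power3_eq_cube algebra_simps)

context
  assumes szabo_form_vanishes: "\<And>x y z. DR y x x z x = 0"
begin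

lemma szabo_form_polarization: "DR y x x z u + DR y x u z x + DR y u x z x = 0"
proof -
  have "DR y (x + u) (x + u) z (x + u) - DR y (x - u) (x - u) z (x - u) - 2 * DR y u u z u
      = 2 * (DR y x x z u + DR y x u z x + DR y u x z x)"
    by (simp only: DR_simps) (simp add: algebra_simps)
  then show ?thesis
    by (simp add: szabo_form_vanishes)
qed

text \<open>With \<open>A p q r = DR p x x q r\<close>, two second Bianchi identities and the polarized
  hypothesis give \<open>3 A a d e = A d e a + A a e d\<close>, while three polarized identities sum to
  \<open>A a d e + A d e a + A a e d = 0\<close>.\<close>
lemma DR_same_23: "DR a x x d e = 0"
  using szabo_form_polarization[of a x d e] szabo_form_polarization[of d x e a]
    szabo_form_polarization[of a x e d] DR_bianchi2[of a x x d e] DR_bianchi2[of d x x a e]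
    DR_szabo_form_sym[of d x a e] DR_antisym_34[of a x e x d] DR_antisym_34[of d x e x a]
    DR_antisym_34[of a x e d x] DR_pair_sym[of a e x d x] DR_antisym_12[of d x a e x]
    DR_antisym_12[of d a x e x]
  by linarith

lemma DR_eq_0_if_szabo_form_vanishes: "DR = (\<lambda>a b c d e. 0)"
proof (intro ext)
  fix a b c d e
  have antisym_23: "DR p q r s e + DR p r q s e = 0" for p q r s
    using DR_same_23[of p "q + r" s e] DR_same_23[of p q s e]
      DR_same_23[of p r s e]
    by (simp add: DR_simps)
  \<comment> \<open>For each fifth argument, \<open>3 R(a,b,c,d) = W(a,b,c,d) - W(b,a,c,d)\<close> with \<open>W(a,b,c,d) = R(a,b,c,d) + R(a,c,b,d)\<close>.\<close>
  show "DR a b c d e = 0"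
    using antisym_23[of a b c d] antisym_23[of b a c d] DR_pair_sym[of b c a d e]
      DR_antisym_34[of a c b d e] DR_bianchi1[of a b c d e] DR_antisym_12[of a b c d e]
    by linarith
qed

end

end

locale szabo_setting = sym_bilinear_form g + cov_deriv_curvature DR
  for g :: "real^'n \<Rightarrow> real^'n \<Rightarrow> real"
    and DR :: "real^'n \<Rightarrow> real^'n \<Rightarrow> real^'n \<Rightarrow> real^'n \<Rightarrow> real^'n \<Rightarrow> real"
begin

abbreviation szabo_sq_trace :: "real^'n \<Rightarrow> real" where
  "szabo_sq_trace x \<equiv> trace (matrix (szabo g DR x \<circ> szabo g DR x))"

context
  fixes b :: "'n \<Rightarrow> real^'n" and t :: 'n
  assumes frame: "lorentz_frame g b t"
begin

lemma szabo_unique: "\<exists>!f. linear f \<and> (\<forall>y w. g (f y) w = DR y x x w x)"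
proof
  let ?S = "\<lambda>y. \<Sum>k\<in>UNIV. (g (b k) (b k) * DR y x x (b k) x) *\<^sub>R b k"
  have "linear ?S"
    by (rule linearI)
      (simp_all add: DR_simps distrib_left scaleR_add_left sum.distrib scaleR_sum_right mult.left_commute)
  moreover have "g (?S y) w = DR y x x w x" for y w
  proof -
    have "g (?S y) w = (\<Sum>k\<in>UNIV. g (b k) (b k) * DR y x x (b k) x * g (b k) w)"
      by (simp add: g_sum_left g_simps)
    also have "\<dots> = DR y x x (\<Sum>k\<in>UNIV. (g (b k) (b k) * g w (b k)) *\<^sub>R b k) x"
      by (simp add: DR_sum DR_simps sym[of "b k" w for k] mult_ac)
    finally show ?thesis
      by (simp only: frame_expansion[OF frame])
  qed
  ultimately show "linear ?S \<and> (\<forall>y w. g (?S y) w = DR y x x w x)"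
    by blast
  show "f = ?S" if "linear f \<and> (\<forall>y w. g (f y) w = DR y x x w x)" for f
  proof
    fix y
    have "g (f y - ?S y) (b k) = 0" for k
      using that \<open>\<And>y w. g (?S y) w = DR y x x w x\<close> by (simp add: g_simps)
    then show "f y = ?S y"
      using frame_nondegenerate[OF frame] by fastforce
  qed
qed

lemma linear_szabo: "linear (szabo g DR x)"
  and szabo_adjoint: "g (szabo g DR x y) w = DR y x x w x"
  using theI'[OF szabo_unique] unfolding szabo_def by blast+

lemma szabo_sq_trace_frame:
  "szabo_sq_trace x =
     (\<Sum>k\<in>UNIV. \<Sum>l\<in>UNIV. g (b k) (b k) * g (b l) (b l) * (DR (b k) x x (b l) x)^2)"
proof -
  have "szabo_sq_trace x = (\<Sum>k\<in>UNIV. g (b k) (b k) * DR (szabo g DR x (b k)) x x (b k) x)"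
    by (simp add: trace_matrix_frame[OF frame] linear_compose[OF linear_szabo linear_szabo] szabo_adjoint)
  also have "\<dots> = (\<Sum>k\<in>UNIV. \<Sum>l\<in>UNIV. g (b k) (b k) * g (b l) (b l) * (DR (b k) x x (b l) x)^2)"
  proof (rule sum.cong[OF refl])
    fix k
    have "szabo g DR x (b k) = (\<Sum>l\<in>UNIV. (g (b l) (b l) * DR (b k) x x (b l) x) *\<^sub>R b l)"
      using frame_expansion[OF frame, of "szabo g DR x (b k)"] by (simp add: szabo_adjoint)
    then have "DR (szabo g DR x (b k)) x x (b k) x = (\<Sum>l\<in>UNIV. g (b l) (b l) * (DR (b k) x x (b l) x)^2)"
      by (simp add: DR_sum DR_simps power2_eq_square DR_szabo_form_sym[of "b l" x "b k" for l] mult.assoc)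
    then show "g (b k) (b k) * DR (szabo g DR x (b k)) x x (b k) x =
        (\<Sum>l\<in>UNIV. g (b k) (b k) * g (b l) (b l) * (DR (b k) x x (b l) x)^2)"
      by (simp add: sum_distrib_left mult_ac)
  qed
  finally show ?thesis .
qed

text \<open>Terms with an index \<open>t\<close> vanish and all other weights are \<open>1\<close>, so the trace is a sum of
  squares.\<close>
lemma szabo_sq_trace_ge:
  assumes "j \<noteq> t"
  shows "(DR (b j) (b t) (b t) (b j) (b t))^2 \<le> szabo_sq_trace (b t)"
proof -
  let ?q = "\<lambda>k l. (DR (b k) (b t) (b t) (b l) (b t))^2"
  have weight: "g (b k) (b k) * g (b l) (b l) * ?q k l = ?q k l" for k l
    by (cases "k = t"; cases "l = t") (simp_all add: frame_spacelike[OF frame] DR_same_12 DR_same_34)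
  have total: "(\<Sum>k\<in>UNIV. \<Sum>l\<in>UNIV. ?q k l) = szabo_sq_trace (b t)"
    by (simp add: szabo_sq_trace_frame weight)
  have "?q j j \<le> (\<Sum>l\<in>UNIV. ?q j l)"
    by (rule member_le_sum) auto
  also have "\<dots> \<le> (\<Sum>k\<in>UNIV. \<Sum>l\<in>UNIV. ?q k l)"
    by (rule member_le_sum) (auto intro: sum_nonneg)
  finally show ?thesis
    by (simp only: total)
qed

end

context
  fixes cm :: real
  assumes card: "CARD('n) \<ge> 3"
    and timelike_const: "\<And>x. g x x = -1 \<Longrightarrow> szabo_sq_trace x = cm"
begin

lemma szabo_form_sq_le_timelike:
  assumes frame: "lorentz_frame g b t" and "j \<noteq> t" and "g x x < 0" and perp: "g x (b j) = 0"
  shows "(DR (b j) x x (b j) x)^2 \<le> cm * (- g x x)^3"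
proof -
  obtain r u where "r > 0" "r^2 = - g x x" "g u u = -1" and x: "x = r *\<^sub>R u"
    using timelike_eq_scale_unit[OF \<open>g x x < 0\<close>] .
  obtain v d where v: "v = u \<or> v = -u" and frame': "lorentz_frame g (\<lambda>k. reflection d (b k)) t"
    and "reflection d (b t) = v" and fixed: "\<forall>y. g y (b t) = 0 \<longrightarrow> g y u = 0 \<longrightarrow> reflection d y = y"
    using frame_reflect_to_unit_timelike[OF frame \<open>g u u = -1\<close>] by blast
  have "g (b j) u = 0"
    using perp \<open>r > 0\<close> by (simp add: x g_simps sym[of "b j"])
  then have "reflection d (b j) = b j"
    using fixed frame_orth[OF frame \<open>j \<noteq> t\<close>] by blast
  then have "(DR (b j) v v (b j) v)^2 \<le> szabo_sq_trace v"
    using szabo_sq_trace_ge[OF frame' \<open>j \<noteq> t\<close>] \<open>reflection d (b t) = v\<close> by simp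
  also have "\<dots> = cm"
    using v \<open>g u u = -1\<close> by (intro timelike_const) (auto simp: g_simps)
  also have "(DR (b j) v v (b j) v)^2 = (DR (b j) u u (b j) u)^2"
    using v by (auto simp: DR_simps)
  finally have bound: "(DR (b j) u u (b j) u)^2 \<le> cm" .
  have "DR (b j) x x (b j) x = r^3 * DR (b j) u u (b j) u"
    by (simp add: x DR_simps power3_eq_cube)
  then have "(DR (b j) x x (b j) x)^2 = (r^2)^3 * (DR (b j) u u (b j) u)^2"
    by (simp add: power_mult_distrib flip: power_mult)
  also have "\<dots> \<le> (r^2)^3 * cm"
    using bound by (simp add: mult_left_mono)
  finally show ?thesis
    by (simp add: \<open>r^2 = - g x x\<close> mult.commute)
qed

lemma szabo_form_frame_diag_eq_0:
  assumes frame: "lorentz_frame g b t" and "j \<noteq> t"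
  shows "DR (b j) (b t) (b t) (b j) (b t) = 0"
proof -
  have "\<not> (UNIV :: 'n set) \<subseteq> {t, j}"
  proof
    assume "(UNIV :: 'n set) \<subseteq> {t, j}"
    then have "CARD('n) \<le> card {t, j}"
      by (intro card_mono) auto
    also have "\<dots> \<le> 2"
      by (simp add: card_insert_if)
    finally show False
      using card by simp
  qed
  then obtain i where "i \<noteq> t" "i \<noteq> j"
    by blast
  obtain c1 c2 c3 where line: "\<And>s. DR (b j) (b t + s *\<^sub>R b i) (b t + s *\<^sub>R b i) (b j) (b t + s *\<^sub>R b i)
      = DR (b j) (b t) (b t) (b j) (b t) + c1 * s + c2 * s^2 + c3 * s^3"
    using DR_szabo_form_along_line[where y = "b j" and x = "b t" and w = "b i" and z = "b j"] by blast
  show ?thesis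
  proof (rule cubic_const_eq_0_if_dominated[where b = c1 and c = c2 and d = c3 and C = cm])
    fix s :: real
    assume "-1 < s" "s < 1"
    then have "s^2 < 1"
      by (simp add: abs_square_less_1 abs_less_iff)
    let ?x = "b t + s *\<^sub>R b i"
    have "g ?x ?x = s^2 - 1" "g ?x (b j) = 0"
      using frame_orth[OF frame] frame_timelike[OF frame] frame_spacelike[OF frame \<open>i \<noteq> t\<close>]
        \<open>i \<noteq> t\<close> \<open>i \<noteq> j\<close> \<open>j \<noteq> t\<close>
      by (simp_all add: g_simps power2_eq_square)
    then have "(DR (b j) ?x ?x (b j) ?x)^2 \<le> cm * (1 - s^2)^3"
      using szabo_form_sq_le_timelike[OF frame \<open>j \<noteq> t\<close>, of ?x] \<open>s^2 < 1\<close> by simp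
    then show "(DR (b j) (b t) (b t) (b j) (b t) + c1 * s + c2 * s^2 + c3 * s^3)^2 \<le> cm * (1 - s^2)^3"
      by (simp only: line)
  qed
qed

text \<open>The unit vector \<open>v = (3/5) b j + (4/5) b k\<close> has both coordinates nonzero, and a reflection
  carries \<open>b j\<close> to \<open>v\<close> while fixing \<open>b t\<close>, so the diagonal case applies to \<open>v\<close>.\<close>
lemma szabo_form_frame_offdiag_eq_0:
  assumes frame: "lorentz_frame g b t" and "j \<noteq> t" "k \<noteq> t" "j \<noteq> k"
  shows "DR (b j) (b t) (b t) (b k) (b t) = 0"
proof -
  define v where "v = (3/5) *\<^sub>R b j + (4/5) *\<^sub>R b k"
  have orth: "g (b j) (b k) = 0" "g (b k) (b j) = 0" "g (b t) (b j) = 0" "g (b t) (b k) = 0"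
    using frame_orth[OF frame] assms(2-4) by auto
  have unit: "g (b j) (b j) = 1" "g (b k) (b k) = 1"
    using frame_spacelike[OF frame] assms(2,3) by auto
  have non_null: "g (b j - v) (b j - v) \<noteq> 0"
    unfolding v_def using orth unit by (simp add: g_simps)
  have "reflection (b j - v) (b j) = v"
    using reflection_swap non_null orth unit by (simp add: v_def g_simps)
  moreover have "reflection (b j - v) (b t) = b t"
    using orth by (intro reflection_fixes) (simp add: v_def g_simps)
  ultimately have "DR v (b t) (b t) v (b t) = 0"
    using szabo_form_frame_diag_eq_0[OF lorentz_frame_reflection[OF non_null frame] \<open>j \<noteq> t\<close>] by simp
  moreover have "DR v (b t) (b t) v (b t) = 9/25 * DR (b j) (b t) (b t) (b j) (b t)
      + 24/25 * DR (b j) (b t) (b t) (b k) (b t) + 16/25 * DR (b k) (b t) (b t) (b k) (b t)"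
    unfolding v_def by (simp add: DR_simps DR_szabo_form_sym[of "b k" _ "b j"] algebra_simps)
  ultimately show ?thesis
    using szabo_form_frame_diag_eq_0[OF frame] assms(2,3) by simp
qed

lemma szabo_form_frame_eq_0:
  assumes frame: "lorentz_frame g b t"
  shows "DR y (b t) (b t) z (b t) = 0"
proof -
  have "DR (b k) (b t) (b t) (b l) (b t) = 0" for k l
    using szabo_form_frame_diag_eq_0[OF frame] szabo_form_frame_offdiag_eq_0[OF frame] DR_same_12 DR_same_34
    by (cases "k = t"; cases "l = t"; cases "k = l") auto
  then have "DR (\<Sum>k\<in>UNIV. (g (b k) (b k) * g y (b k)) *\<^sub>R b k) (b t) (b t)
      (\<Sum>l\<in>UNIV. (g (b l) (b l) * g z (b l)) *\<^sub>R b l) (b t) = 0"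
    by (simp add: DR_sum DR_simps)
  then show ?thesis
    by (simp only: frame_expansion[OF frame])
qed

lemma szabo_form_timelike_eq_0:
  assumes frame: "lorentz_frame g b t" and "g x x < 0"
  shows "DR y x x z x = 0"
proof -
  obtain r u where "g u u = -1" and x: "x = r *\<^sub>R u"
    using timelike_eq_scale_unit[OF \<open>g x x < 0\<close>] .
  obtain v d where v: "v = u \<or> v = -u" and frame': "lorentz_frame g (\<lambda>k. reflection d (b k)) t"
    and "reflection d (b t) = v"
    using frame_reflect_to_unit_timelike[OF frame \<open>g u u = -1\<close>] by metis
  have "DR y v v z v = 0"
    using szabo_form_frame_eq_0[OF frame', of y z] unfolding \<open>reflection d (b t) = v\<close> .
  then have "DR y u u z u = 0"
    using v by (auto simp: DR_simps)
  then show ?thesis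
    by (simp add: x DR_simps)
qed

text \<open>Along \<open>x + s b t\<close> the Szabo form is a cubic in \<open>s\<close> that vanishes once the line has
  entered the timelike cone, hence also at \<open>s = 0\<close>.\<close>
lemma szabo_form_eq_0:
  assumes frame: "lorentz_frame g b t"
  shows "DR y x x z x = 0"
proof -
  obtain c1 c2 c3 where line: "\<And>s. DR y (x + s *\<^sub>R b t) (x + s *\<^sub>R b t) z (x + s *\<^sub>R b t)
      = DR y x x z x + c1 * s + c2 * s^2 + c3 * s^3"
    using DR_szabo_form_along_line[where w = "b t"] by blast
  have "g (x + s *\<^sub>R b t) (x + s *\<^sub>R b t) = g x x + 2 * s * g x (b t) - s^2" for s
    using frame_timelike[OF frame] by (simp add: g_simps sym[of "b t" x] power2_eq_square algebra_simps)
  moreover have "\<forall>\<^sub>F s in at_top. g x x + 2 * s * g x (b t) - s^2 < 0"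
    by real_asymp
  ultimately have "\<forall>\<^sub>F s in at_top. g (x + s *\<^sub>R b t) (x + s *\<^sub>R b t) < 0"
    by simp
  then have "\<forall>\<^sub>F s in at_top. DR y (x + s *\<^sub>R b t) (x + s *\<^sub>R b t) z (x + s *\<^sub>R b t) = 0"
    by (rule eventually_mono) (rule szabo_form_timelike_eq_0[OF frame])
  then show ?thesis
    unfolding line
    by (rule cubic_const_eq_0_if_eventually_0)
qed

end

end

theorem theorem1p6:
  fixes g :: "real^'n \<Rightarrow> real^'n \<Rightarrow> real"
    and DR :: "real^'n \<Rightarrow> real^'n \<Rightarrow> real^'n \<Rightarrow> real^'n \<Rightarrow> real^'n \<Rightarrow> real"
  assumes "CARD('n) \<ge> 3"
    and "lorentzian g"
    and "cov_deriv_alg_curv DR"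
    and "\<exists>c. \<forall>x. g x x = 1 \<longrightarrow> trace (matrix (szabo g DR x \<circ> szabo g DR x)) = c"
    and "\<exists>c. \<forall>x. g x x = -1 \<longrightarrow> trace (matrix (szabo g DR x \<circ> szabo g DR x)) = c"
  shows "DR = (\<lambda>a b c d e. 0)"
proof -
  interpret szabo_setting g DR
    using lorentzian_sym_bilinear_form[OF assms(2)] assms(3)
    by (simp add: szabo_setting_def cov_deriv_curvature_def)
  obtain b t where frame: "lorentz_frame g b t"
    using lorentzian_frame_exists[OF assms(2)] .
  obtain cm where "\<And>x. g x x = -1 \<Longrightarrow> szabo_sq_trace x = cm"
    using assms(5) by blast
  then have "DR y x x z x = 0" for x y z
    using szabo_form_eq_0[OF assms(1) _ frame] by blast
  then show ?thesis
    by (rule DR_eq_0_if_szabo_form_vanishes)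
qed

end
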